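(* Let $M$ be a monoid defined by a positive homogeneous presentation on a generator set $L$. Then: (i) every fundamental element $\Delta$ of $M$ is quasi-central, and the permutation of $L/\!\sim$ associated with $\Delta$ as a fundamental element coincides with the one associated with it as a quasi-central element; (ii) if $\Delta$ is fundamental and $\Delta'$ is quasi-central, then $\Delta\Delta'$ and $\Delta'\Delta$ are fundamental, with associated permutations $\sigma_{\Delta\Delta'}=\sigma_{\Delta'}\circ\sigma_\Delta$ and $\sigma_{\Delta'\Delta}=\sigma_\Delta\circ\sigma_{\Delta'}$, and one can take $(\Delta\Delta')_x=\Delta_x\Delta'$ and $(\Delta'\Delta)_x=\Delta'\Delta_{\sigma_{\Delta'}(x)}$ for $x\in L/\!\sim$. In particular $\mathcal{F}(M)\mathcal{QZ}(M)=\mathcal{QZ}(M)\mathcal{F}(M)=\mathcal{F}(M)$.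
   Context: A positive homogeneous presentation consists of generators $L$ and relations $R=S$ with $R,S$ positive words in $L$ of equal length; $M$ is the quotient of the free monoid $L^*$ by the congruence generated by these relations. $L/\!\sim$ is the quotient of $L$ by the equivalence generated by relations equating two letters; its elements are regarded as elements of $M$. $\Delta\in M$ is quasi-central if there is a permutation $\sigma_\Delta$ of $L/\!\sim$ with $x\Delta=\Delta\sigma_\Delta(x)$ for all $x\in L/\!\sim$; $\mathcal{QZ}(M)$ is the set of quasi-central elements. $\Delta\in M$ is fundamental if there is a permutation $\sigma_\Delta$ of $L/\!\sim$ such that for each $x\in L/\!\sim$ there is $\Delta_x\in M$ with $\Delta=x\Delta_x=\Delta_x\sigma_\Delta(x)$; $\mathcal{F}(M)$ is the set of fundamental elements. *)

theory Defs
  imports Main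
begin

definition pos_hom_pres :: "'a set \<Rightarrow> ('a list \<times> 'a list) set \<Rightarrow> bool" where
  "pos_hom_pres L Rel \<longleftrightarrow>
     (\<forall>(r, s) \<in> Rel. set r \<subseteq> L \<and> set s \<subseteq> L \<and> length r = length s)"

inductive_set pcong :: "'a set \<Rightarrow> ('a list \<times> 'a list) set \<Rightarrow> ('a list \<times> 'a list) set"
  for L :: "'a set" and Rel :: "('a list \<times> 'a list) set" where
  refl: "w \<in> lists L \<Longrightarrow> (w, w) \<in> pcong L Rel"
| rel: "(r, s) \<in> Rel \<Longrightarrow> u \<in> lists L \<Longrightarrow> v \<in> lists L \<Longrightarrow> (u @ r @ v, u @ s @ v) \<in> pcong L Rel"
| sym: "(a, b) \<in> pcong L Rel \<Longrightarrow> (b, a) \<in> pcong L Rel"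
| trans: "(a, b) \<in> pcong L Rel \<Longrightarrow> (b, c) \<in> pcong L Rel \<Longrightarrow> (a, c) \<in> pcong L Rel"

definition Mon :: "'a set \<Rightarrow> ('a list \<times> 'a list) set \<Rightarrow> 'a list set set" where
  "Mon L Rel = lists L // pcong L Rel"

definition mmul :: "'a set \<Rightarrow> ('a list \<times> 'a list) set \<Rightarrow> 'a list set \<Rightarrow> 'a list set \<Rightarrow> 'a list set" where
  "mmul L Rel A B = {w. \<exists>a\<in>A. \<exists>b\<in>B. (a @ b, w) \<in> pcong L Rel}"

definition letter_eq :: "'a set \<Rightarrow> ('a list \<times> 'a list) set \<Rightarrow> ('a \<times> 'a) set" where
  "letter_eq L Rel =
     (Id_on L \<union> {(a, b). a \<in> L \<and> b \<in> L \<and> (([a], [b]) \<in> Rel \<or> ([b], [a]) \<in> Rel)})\<^sup>+"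

definition Lq :: "'a set \<Rightarrow> ('a list \<times> 'a list) set \<Rightarrow> 'a set set" where
  "Lq L Rel = L // letter_eq L Rel"

definition elt :: "'a set \<Rightarrow> ('a list \<times> 'a list) set \<Rightarrow> 'a set \<Rightarrow> 'a list set" where
  "elt L Rel C = pcong L Rel `` {[SOME x. x \<in> C]}"

definition qc_perm :: "'a set \<Rightarrow> ('a list \<times> 'a list) set \<Rightarrow> 'a list set \<Rightarrow> ('a set \<Rightarrow> 'a set) \<Rightarrow> bool" where
  "qc_perm L Rel \<Delta> \<sigma> \<longleftrightarrow> bij_betw \<sigma> (Lq L Rel) (Lq L Rel) \<and>
     (\<forall>x\<in>Lq L Rel. mmul L Rel (elt L Rel x) \<Delta> = mmul L Rel \<Delta> (elt L Rel (\<sigma> x)))"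

definition QZ :: "'a set \<Rightarrow> ('a list \<times> 'a list) set \<Rightarrow> 'a list set set" where
  "QZ L Rel = {\<Delta> \<in> Mon L Rel. \<exists>\<sigma>. qc_perm L Rel \<Delta> \<sigma>}"

definition fund_wit :: "'a set \<Rightarrow> ('a list \<times> 'a list) set \<Rightarrow> 'a list set \<Rightarrow> ('a set \<Rightarrow> 'a set)
    \<Rightarrow> ('a set \<Rightarrow> 'a list set) \<Rightarrow> bool" where
  "fund_wit L Rel \<Delta> \<sigma> D \<longleftrightarrow> bij_betw \<sigma> (Lq L Rel) (Lq L Rel) \<and>
     (\<forall>x\<in>Lq L Rel. D x \<in> Mon L Rel \<and> \<Delta> = mmul L Rel (elt L Rel x) (D x) \<and>
        \<Delta> = mmul L Rel (D x) (elt L Rel (\<sigma> x)))"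

definition Fund :: "'a set \<Rightarrow> ('a list \<times> 'a list) set \<Rightarrow> 'a list set set" where
  "Fund L Rel = {\<Delta> \<in> Mon L Rel. \<exists>\<sigma> D. fund_wit L Rel \<Delta> \<sigma> D}"

definition setmul :: "'a set \<Rightarrow> ('a list \<times> 'a list) set \<Rightarrow> 'a list set set \<Rightarrow> 'a list set set \<Rightarrow> 'a list set set" where
  "setmul L Rel X Y = {mmul L Rel a b | a b. a \<in> X \<and> b \<in> Y}"

end

theory Submission
  imports Defs
begin

text \<open>Both parts are pure monoid algebra once the quotient of the free monoid is known to be
an associative monoid with unit the class of the empty word. If \<open>\<Delta> = x \<Delta>\<^sub>x = \<Delta>\<^sub>x \<sigma>(x)\<close>
then \<open>x \<Delta> = x \<Delta>\<^sub>x \<sigma>(x) = \<Delta> \<sigma>(x)\<close>. For a product with a quasi-central \<open>\<Delta>'\<close>, the letter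
is moved across \<open>\<Delta>'\<close> using \<open>y \<Delta>' = \<Delta>' \<sigma>'(y)\<close>. The unit is quasi-central, which gives
the reverse inclusions of the set identities.\<close>

lemma pcong_in_lists:
  assumes "pos_hom_pres L Rel" and "(a, b) \<in> pcong L Rel"
  shows "a \<in> lists L" "b \<in> lists L"
  using assms(2) by (induction rule: pcong.induct)
    (use assms(1) in \<open>fastforce simp: pos_hom_pres_def\<close>)+

lemma pcong_append_right:
  "(a, b) \<in> pcong L Rel \<Longrightarrow> c \<in> lists L \<Longrightarrow> (a @ c, b @ c) \<in> pcong L Rel"
proof (induction rule: pcong.induct)
  case (refl w)
  then show ?case by (simp add: pcong.refl)
next
  case (rel r s u v)
  then show ?case using pcong.rel[of r s Rel u L "v @ c"] by simp
qed (blast intro: pcong.sym pcong.trans)+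

lemma pcong_append_left:
  "(a, b) \<in> pcong L Rel \<Longrightarrow> c \<in> lists L \<Longrightarrow> (c @ a, c @ b) \<in> pcong L Rel"
proof (induction rule: pcong.induct)
  case (refl w)
  then show ?case by (simp add: pcong.refl)
next
  case (rel r s u v)
  then show ?case using pcong.rel[of r s Rel "c @ u" L v] by simp
qed (blast intro: pcong.sym pcong.trans)+

lemma pcong_append:
  assumes "pos_hom_pres L Rel" "(a, b) \<in> pcong L Rel" "(c, d) \<in> pcong L Rel"
  shows "(a @ c, b @ d) \<in> pcong L Rel"
  using pcong_append_right[OF assms(2)] pcong_append_left[OF assms(3)]
    pcong_in_lists[OF assms(1)] assms pcong.trans by metis

lemma mmul_classes:
  assumes "pos_hom_pres L Rel" "a \<in> lists L" "b \<in> lists L"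
  shows "mmul L Rel (pcong L Rel `` {a}) (pcong L Rel `` {b}) = pcong L Rel `` {a @ b}"
proof (intro equalityI subsetI)
  fix w assume "w \<in> mmul L Rel (pcong L Rel `` {a}) (pcong L Rel `` {b})"
  then obtain a' b' where "(a, a') \<in> pcong L Rel" "(b, b') \<in> pcong L Rel"
    "(a' @ b', w) \<in> pcong L Rel"
    unfolding mmul_def by blast
  then show "w \<in> pcong L Rel `` {a @ b}"
    using pcong_append[OF assms(1)] pcong.trans by blast
next
  fix w assume "w \<in> pcong L Rel `` {a @ b}"
  moreover have "a \<in> pcong L Rel `` {a}" "b \<in> pcong L Rel `` {b}"
    using assms(2,3) by (auto intro: pcong.refl)
  ultimately show "w \<in> mmul L Rel (pcong L Rel `` {a}) (pcong L Rel `` {b})"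
    unfolding mmul_def by blast
qed

lemma MonE:
  assumes "A \<in> Mon L Rel"
  obtains a where "a \<in> lists L" "A = pcong L Rel `` {a}"
  using assms unfolding Mon_def quotient_def by blast

lemma class_in_Mon: "a \<in> lists L \<Longrightarrow> pcong L Rel `` {a} \<in> Mon L Rel"
  unfolding Mon_def by (rule quotientI)

lemma mmul_in_Mon:
  assumes "pos_hom_pres L Rel" "A \<in> Mon L Rel" "B \<in> Mon L Rel"
  shows "mmul L Rel A B \<in> Mon L Rel"
  using assms(2,3) by (elim MonE) (simp add: mmul_classes[OF assms(1)] class_in_Mon)

lemma mmul_assoc:
  assumes "pos_hom_pres L Rel" "A \<in> Mon L Rel" "B \<in> Mon L Rel" "C \<in> Mon L Rel"
  shows "mmul L Rel (mmul L Rel A B) C = mmul L Rel A (mmul L Rel B C)"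
  using assms(2-4) by (elim MonE) (simp add: mmul_classes[OF assms(1)])

lemma mmul_unit:
  assumes "pos_hom_pres L Rel" "A \<in> Mon L Rel"
  shows mmul_unit_right: "mmul L Rel A (pcong L Rel `` {[]}) = A"
    and mmul_unit_left: "mmul L Rel (pcong L Rel `` {[]}) A = A"
  using assms(2) by (elim MonE, simp add: mmul_classes[OF assms(1)])+

lemma letter_eq_subset: "letter_eq L Rel \<subseteq> L \<times> L"
  unfolding letter_eq_def by (rule trancl_subset_Sigma) auto

lemma elt_in_Mon:
  assumes "x \<in> Lq L Rel"
  shows "elt L Rel x \<in> Mon L Rel"
proof -
  obtain a where a: "a \<in> L" "x = letter_eq L Rel `` {a}"
    using assms unfolding Lq_def by (auto elim: quotientE)
  then have "a \<in> x" unfolding letter_eq_def by auto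
  then have "(SOME y. y \<in> x) \<in> x" by (rule someI)
  then have "(SOME y. y \<in> x) \<in> L" using a letter_eq_subset by blast
  then show ?thesis unfolding elt_def by (simp add: class_in_Mon)
qed

lemma fund_wit_imp_qc_perm:
  assumes pres: "pos_hom_pres L Rel" and wit: "fund_wit L Rel \<Delta> \<sigma> D"
  shows "qc_perm L Rel \<Delta> \<sigma>"
  unfolding qc_perm_def
proof (intro conjI ballI)
  show bij: "bij_betw \<sigma> (Lq L Rel) (Lq L Rel)" using wit unfolding fund_wit_def by blast
  fix x assume x: "x \<in> Lq L Rel"
  then have D: "D x \<in> Mon L Rel" "\<Delta> = mmul L Rel (elt L Rel x) (D x)"
    "\<Delta> = mmul L Rel (D x) (elt L Rel (\<sigma> x))"
    using wit unfolding fund_wit_def by auto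
  have "\<sigma> x \<in> Lq L Rel" using bij x by (simp add: bij_betw_apply)
  then have "mmul L Rel (elt L Rel x) (mmul L Rel (D x) (elt L Rel (\<sigma> x)))
      = mmul L Rel (mmul L Rel (elt L Rel x) (D x)) (elt L Rel (\<sigma> x))"
    by (simp add: mmul_assoc[OF pres] elt_in_Mon x D(1))
  then show "mmul L Rel (elt L Rel x) \<Delta> = mmul L Rel \<Delta> (elt L Rel (\<sigma> x))"
    using D(2,3) by simp
qed

lemma fund_wit_mmul_qc_right:
  assumes pres: "pos_hom_pres L Rel"
    and wit: "\<Delta> \<in> Mon L Rel" "fund_wit L Rel \<Delta> \<sigma> D"
    and qc: "\<Delta>' \<in> Mon L Rel" "qc_perm L Rel \<Delta>' \<sigma>'"
  shows "fund_wit L Rel (mmul L Rel \<Delta> \<Delta>') (\<sigma>' \<circ> \<sigma>) (\<lambda>x. mmul L Rel (D x) \<Delta>')"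
  unfolding fund_wit_def
proof (intro conjI ballI)
  let ?m = "mmul L Rel" and ?e = "elt L Rel"
  have bij: "bij_betw \<sigma> (Lq L Rel) (Lq L Rel)" "bij_betw \<sigma>' (Lq L Rel) (Lq L Rel)"
    using wit qc unfolding fund_wit_def qc_perm_def by blast+
  then show "bij_betw (\<sigma>' \<circ> \<sigma>) (Lq L Rel) (Lq L Rel)" using bij_betw_trans by blast
  fix x assume x: "x \<in> Lq L Rel"
  then have D: "D x \<in> Mon L Rel" "\<Delta> = ?m (?e x) (D x)" "\<Delta> = ?m (D x) (?e (\<sigma> x))"
    using wit unfolding fund_wit_def by auto
  have \<sigma>x: "\<sigma> x \<in> Lq L Rel" "\<sigma>' (\<sigma> x) \<in> Lq L Rel" using bij x by (simp_all add: bij_betw_apply)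
  note assoc = mmul_assoc[OF pres] and in_Mon = elt_in_Mon[OF x] elt_in_Mon[OF \<sigma>x(1)]
    elt_in_Mon[OF \<sigma>x(2)] D(1) qc(1)
  show "?m (D x) \<Delta>' \<in> Mon L Rel" using mmul_in_Mon[OF pres] D qc by blast
  have "?m \<Delta> \<Delta>' = ?m (?m (?e x) (D x)) \<Delta>'" using D(2) by simp
  also have "\<dots> = ?m (?e x) (?m (D x) \<Delta>')" using assoc in_Mon by simp
  finally show "?m \<Delta> \<Delta>' = ?m (?e x) (?m (D x) \<Delta>')" .
  have "?m \<Delta> \<Delta>' = ?m (?m (D x) (?e (\<sigma> x))) \<Delta>'" using D(3) by simp
  also have "\<dots> = ?m (D x) (?m (?e (\<sigma> x)) \<Delta>')" using assoc in_Mon by simp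
  also have "\<dots> = ?m (D x) (?m \<Delta>' (?e (\<sigma>' (\<sigma> x))))"
    using qc \<sigma>x unfolding qc_perm_def by simp
  also have "\<dots> = ?m (?m (D x) \<Delta>') (?e ((\<sigma>' \<circ> \<sigma>) x))" using assoc in_Mon by simp
  finally show "?m \<Delta> \<Delta>' = ?m (?m (D x) \<Delta>') (?e ((\<sigma>' \<circ> \<sigma>) x))" .
qed

lemma fund_wit_mmul_qc_left:
  assumes pres: "pos_hom_pres L Rel"
    and wit: "\<Delta> \<in> Mon L Rel" "fund_wit L Rel \<Delta> \<sigma> D"
    and qc: "\<Delta>' \<in> Mon L Rel" "qc_perm L Rel \<Delta>' \<sigma>'"
  shows "fund_wit L Rel (mmul L Rel \<Delta>' \<Delta>) (\<sigma> \<circ> \<sigma>') (\<lambda>x. mmul L Rel \<Delta>' (D (\<sigma>' x)))"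
  unfolding fund_wit_def
proof (intro conjI ballI)
  let ?m = "mmul L Rel" and ?e = "elt L Rel"
  have bij: "bij_betw \<sigma> (Lq L Rel) (Lq L Rel)" "bij_betw \<sigma>' (Lq L Rel) (Lq L Rel)"
    using wit qc unfolding fund_wit_def qc_perm_def by blast+
  then show "bij_betw (\<sigma> \<circ> \<sigma>') (Lq L Rel) (Lq L Rel)" using bij_betw_trans by blast
  fix x assume x: "x \<in> Lq L Rel"
  have \<sigma>'x: "\<sigma>' x \<in> Lq L Rel" "\<sigma> (\<sigma>' x) \<in> Lq L Rel" using bij x by (simp_all add: bij_betw_apply)
  then have D: "D (\<sigma>' x) \<in> Mon L Rel" "\<Delta> = ?m (?e (\<sigma>' x)) (D (\<sigma>' x))"
    "\<Delta> = ?m (D (\<sigma>' x)) (?e (\<sigma> (\<sigma>' x)))"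
    using wit unfolding fund_wit_def by auto
  note assoc = mmul_assoc[OF pres] and in_Mon = elt_in_Mon[OF x] elt_in_Mon[OF \<sigma>'x(1)]
    elt_in_Mon[OF \<sigma>'x(2)] D(1) qc(1)
  show "?m \<Delta>' (D (\<sigma>' x)) \<in> Mon L Rel" using mmul_in_Mon[OF pres] D qc by blast
  have "?m (?e x) (?m \<Delta>' (D (\<sigma>' x))) = ?m (?m (?e x) \<Delta>') (D (\<sigma>' x))"
    using assoc in_Mon by simp
  also have "\<dots> = ?m (?m \<Delta>' (?e (\<sigma>' x))) (D (\<sigma>' x))"
    using qc x unfolding qc_perm_def by simp
  also have "\<dots> = ?m \<Delta>' (?m (?e (\<sigma>' x)) (D (\<sigma>' x)))" using assoc in_Mon by simp
  finally show "?m \<Delta>' \<Delta> = ?m (?e x) (?m \<Delta>' (D (\<sigma>' x)))" using D(2) by simp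
  have "?m \<Delta>' \<Delta> = ?m \<Delta>' (?m (D (\<sigma>' x)) (?e (\<sigma> (\<sigma>' x))))" using D(3) by simp
  also have "\<dots> = ?m (?m \<Delta>' (D (\<sigma>' x))) (?e ((\<sigma> \<circ> \<sigma>') x))" using assoc in_Mon by simp
  finally show "?m \<Delta>' \<Delta> = ?m (?m \<Delta>' (D (\<sigma>' x))) (?e ((\<sigma> \<circ> \<sigma>') x))" .
qed

lemma FundI: "\<Delta> \<in> Mon L Rel \<Longrightarrow> fund_wit L Rel \<Delta> \<sigma> D \<Longrightarrow> \<Delta> \<in> Fund L Rel"
  unfolding Fund_def by blast

lemma FundE:
  assumes "\<Delta> \<in> Fund L Rel"
  obtains \<sigma> D where "\<Delta> \<in> Mon L Rel" "fund_wit L Rel \<Delta> \<sigma> D"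
  using assms unfolding Fund_def by blast

lemma QZE:
  assumes "\<Delta> \<in> QZ L Rel"
  obtains \<sigma> where "\<Delta> \<in> Mon L Rel" "qc_perm L Rel \<Delta> \<sigma>"
  using assms unfolding QZ_def by blast

lemma unit_in_QZ:
  assumes "pos_hom_pres L Rel"
  shows "pcong L Rel `` {[]} \<in> QZ L Rel"
proof -
  have "qc_perm L Rel (pcong L Rel `` {[]}) id"
    unfolding qc_perm_def by (simp add: mmul_unit[OF assms] elt_in_Mon bij_betw_id)
  then show ?thesis unfolding QZ_def using class_in_Mon[of "[]" L Rel] by auto
qed

lemma setmul_Fund_QZ:
  assumes pres: "pos_hom_pres L Rel"
  shows "setmul L Rel (Fund L Rel) (QZ L Rel) = Fund L Rel"
proof (intro equalityI subsetI)
  fix X assume "X \<in> setmul L Rel (Fund L Rel) (QZ L Rel)"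
  then obtain \<Delta> \<Delta>' where X: "X = mmul L Rel \<Delta> \<Delta>'" "\<Delta> \<in> Fund L Rel" "\<Delta>' \<in> QZ L Rel"
    unfolding setmul_def by blast
  then obtain \<sigma> D \<sigma>' where "\<Delta> \<in> Mon L Rel" "fund_wit L Rel \<Delta> \<sigma> D"
    "\<Delta>' \<in> Mon L Rel" "qc_perm L Rel \<Delta>' \<sigma>'"
    by (blast elim: FundE QZE)
  then show "X \<in> Fund L Rel"
    unfolding X by (blast intro: FundI mmul_in_Mon[OF pres] fund_wit_mmul_qc_right[OF pres])
next
  fix X assume X: "X \<in> Fund L Rel"
  then have "X = mmul L Rel X (pcong L Rel `` {[]})"
    by (auto elim: FundE simp: mmul_unit[OF pres])
  then show "X \<in> setmul L Rel (Fund L Rel) (QZ L Rel)"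
    unfolding setmul_def using X unit_in_QZ[OF pres] by blast
qed

lemma setmul_QZ_Fund:
  assumes pres: "pos_hom_pres L Rel"
  shows "setmul L Rel (QZ L Rel) (Fund L Rel) = Fund L Rel"
proof (intro equalityI subsetI)
  fix X assume "X \<in> setmul L Rel (QZ L Rel) (Fund L Rel)"
  then obtain \<Delta> \<Delta>' where X: "X = mmul L Rel \<Delta>' \<Delta>" "\<Delta>' \<in> QZ L Rel" "\<Delta> \<in> Fund L Rel"
    unfolding setmul_def by blast
  then obtain \<sigma> D \<sigma>' where "\<Delta> \<in> Mon L Rel" "fund_wit L Rel \<Delta> \<sigma> D"
    "\<Delta>' \<in> Mon L Rel" "qc_perm L Rel \<Delta>' \<sigma>'"
    by (blast elim: FundE QZE)
  then show "X \<in> Fund L Rel"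
    unfolding X by (blast intro: FundI mmul_in_Mon[OF pres] fund_wit_mmul_qc_left[OF pres])
next
  fix X assume X: "X \<in> Fund L Rel"
  then have "X = mmul L Rel (pcong L Rel `` {[]}) X"
    by (auto elim: FundE simp: mmul_unit[OF pres])
  then show "X \<in> setmul L Rel (QZ L Rel) (Fund L Rel)"
    unfolding setmul_def using X unit_in_QZ[OF pres] by blast
qed

theorem fact3:
  fixes L :: "'a set" and Rel :: "('a list \<times> 'a list) set"
  assumes pres: "pos_hom_pres L Rel"
  shows
    "(\<forall>\<Delta> \<sigma> D. \<Delta> \<in> Mon L Rel \<and> fund_wit L Rel \<Delta> \<sigma> D \<longrightarrow>
        \<Delta> \<in> QZ L Rel \<and> qc_perm L Rel \<Delta> \<sigma>)
   \<and> (\<forall>\<Delta> \<sigma> D \<Delta>' \<sigma>'. \<Delta> \<in> Mon L Rel \<and> fund_wit L Rel \<Delta> \<sigma> D \<and>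
        \<Delta>' \<in> Mon L Rel \<and> qc_perm L Rel \<Delta>' \<sigma>' \<longrightarrow>
          mmul L Rel \<Delta> \<Delta>' \<in> Fund L Rel \<and>
          fund_wit L Rel (mmul L Rel \<Delta> \<Delta>') (\<sigma>' \<circ> \<sigma>) (\<lambda>x. mmul L Rel (D x) \<Delta>') \<and>
          mmul L Rel \<Delta>' \<Delta> \<in> Fund L Rel \<and>
          fund_wit L Rel (mmul L Rel \<Delta>' \<Delta>) (\<sigma> \<circ> \<sigma>') (\<lambda>x. mmul L Rel \<Delta>' (D (\<sigma>' x))))
   \<and> setmul L Rel (Fund L Rel) (QZ L Rel) = Fund L Rel
   \<and> setmul L Rel (QZ L Rel) (Fund L Rel) = Fund L Rel"
  using fund_wit_imp_qc_perm[OF pres] fund_wit_mmul_qc_right[OF pres]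
    fund_wit_mmul_qc_left[OF pres] setmul_Fund_QZ[OF pres] setmul_QZ_Fund[OF pres]
  by (auto simp: QZ_def) (meson FundI mmul_in_Mon[OF pres])+

end
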